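(* Let $(\gamma_n)$ be a sequence of positive reals satisfying conditions (C1)–(C7) below, with associated polynomials $p_n$ and operators $K^n_t$. Then for all $f,g\in C^\infty_{\mathbb{R}\to\mathbb{C}}$ and all $n\in\mathbb{N}$, \[ \frac{d}{dt}\left[\sum_{m=0}^n K^m_t[f(t)]\,K^m_t[g(t)]\right]=\gamma_n\bigl(K^{n+1}_t[f(t)]\,K^n_t[g(t)]+K^n_t[f(t)]\,K^{n+1}_t[g(t)]\bigr). \]
   Context: Given positive reals $\gamma_n$, set $\gamma_{-1}=1$, $p_{-1}=0$, $p_0=1$ and $\gamma_n p_{n+1}(\omega)=\omega p_n(\omega)-\gamma_{n-1}p_{n-1}(\omega)$ ($n\ge0$). Let $\Delta_n=\gamma_{n+1}-\gamma_n$, $\Delta^2_n=\Delta_{n+1}-\Delta_n$. Conditions: (C1) $\gamma_n\to\infty$; (C2) $\Delta_n\to0$; (C3) there exist $n_0,m_0$ with $\gamma_{n+m}>\gamma_n$ for all $n\ge n_0$, $m\ge m_0$; (C4) $\sum 1/\gamma_j=\infty$; (C5) some $\kappa>1$ has $\sum\gamma_j^{-\kappa}<\infty$; (C6) $\sum|\Delta_n|/\gamma_n^2<\infty$; (C7) $\sum|\Delta^2_n|/\gamma_n<\infty$. $C^\infty_{\mathbb{R}\to\mathbb{C}}$ is the set of functions $\mathbb{R}\to\mathbb{C}$ whose real and imaginary parts are infinitely differentiable. The operators are $K^n_t=(-i)^n p_n\!\left(i\frac{d}{dt}\right)$. *)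

theory Defs
  imports "HOL-Analysis.Analysis" "HOL-Computational_Algebra.Polynomial"
begin

text \<open>Polynomials p_n: p_0 = 1, gamma_0 p_1 = w p_0 (since p_(-1) = 0),
  gamma_(n+1) p_(n+2) = w p_(n+1) - gamma_n p_n.\<close>
fun opoly :: "(nat \<Rightarrow> real) \<Rightarrow> nat \<Rightarrow> real poly" where
  "opoly \<gamma> 0 = 1"
| "opoly \<gamma> (Suc 0) = smult (1 / \<gamma> 0) [:0, 1:]"
| "opoly \<gamma> (Suc (Suc n)) =
     smult (1 / \<gamma> (Suc n)) ([:0, 1:] * opoly \<gamma> (Suc n) - smult (\<gamma> n) (opoly \<gamma> n))"

fun nderiv :: "nat \<Rightarrow> (real \<Rightarrow> complex) \<Rightarrow> real \<Rightarrow> complex" where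
  "nderiv 0 f = f"
| "nderiv (Suc k) f = (\<lambda>t. vector_derivative (nderiv k f) (at t))"

definition smooth_RC :: "(real \<Rightarrow> complex) \<Rightarrow> bool" where
  "smooth_RC f \<longleftrightarrow>
     (\<forall>k t. (deriv ^^ k) (\<lambda>s. Re (f s)) differentiable (at t)) \<and>
     (\<forall>k t. (deriv ^^ k) (\<lambda>s. Im (f s)) differentiable (at t))"

text \<open>K^n_t = (-i)^n p_n(i d/dt), applied to f, evaluated at t.\<close>
definition Kop :: "(nat \<Rightarrow> real) \<Rightarrow> nat \<Rightarrow> (real \<Rightarrow> complex) \<Rightarrow> real \<Rightarrow> complex" where
  "Kop \<gamma> n f t = (-\<i>) ^ n *
     (\<Sum>k\<le>degree (opoly \<gamma> n). complex_of_real (coeff (opoly \<gamma> n) k) * \<i> ^ k * nderiv k f t)"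

end

theory Submission
  imports Defs
begin

text \<open>Differentiating \<open>K\<^sup>m\<close> multiplies its polynomial by \<open>-\<i>\<omega>\<close>, so the three-term recurrence
  of the \<open>p\<^sub>m\<close> gives \<open>(K\<^sup>m)' = \<gamma>\<^sub>m K\<^sup>m\<^sup>+\<^sup>1 - \<gamma>\<^sub>m\<^sub>-\<^sub>1 K\<^sup>m\<^sup>-\<^sup>1\<close>. By the product rule the derivative of
  \<open>\<Sum>\<^sub>m\<^sub>\<le>\<^sub>n K\<^sup>m f K\<^sup>m g\<close> telescopes to its last boundary term.\<close>

lemma has_vector_derivative_deriv_parts:
  assumes "smooth_RC f"
  shows "((\<lambda>s. of_real ((deriv ^^ k) (\<lambda>s. Re (f s)) s) + \<i> * of_real ((deriv ^^ k) (\<lambda>s. Im (f s)) s))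
          has_vector_derivative
            of_real ((deriv ^^ Suc k) (\<lambda>s. Re (f s)) t) + \<i> * of_real ((deriv ^^ Suc k) (\<lambda>s. Im (f s)) t))
         (at t)"
proof -
  have "((deriv ^^ k) (\<lambda>s. Re (f s)) has_real_derivative (deriv ^^ Suc k) (\<lambda>s. Re (f s)) t) (at t)"
       "((deriv ^^ k) (\<lambda>s. Im (f s)) has_real_derivative (deriv ^^ Suc k) (\<lambda>s. Im (f s)) t) (at t)"
    using assms unfolding smooth_RC_def by (simp_all add: DERIV_deriv_iff_real_differentiable)
  then show ?thesis
    by (intro has_vector_derivative_add has_vector_derivative_mult_right has_vector_derivative_of_real)
qed

lemma nderiv_eq_deriv_parts:
  assumes "smooth_RC f"
  shows "nderiv k f =
           (\<lambda>s. of_real ((deriv ^^ k) (\<lambda>s. Re (f s)) s) + \<i> * of_real ((deriv ^^ k) (\<lambda>s. Im (f s)) s))"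
proof (induction k)
  case 0
  show ?case by (simp add: fun_eq_iff complex_eq)
next
  case (Suc k)
  then show ?case
    using has_vector_derivative_deriv_parts[OF assms] by (auto simp: vector_derivative_at)
qed

lemma has_vector_derivative_nderiv:
  assumes "smooth_RC f"
  shows "(nderiv k f has_vector_derivative nderiv (Suc k) f t) (at t)"
  using has_vector_derivative_deriv_parts[OF assms, of k t] nderiv_eq_deriv_parts[OF assms] by simp

lemma nderiv_nderiv_1: "nderiv k (nderiv 1 f) = nderiv (Suc k) f"
  by (induction k) simp_all

definition poly_diffop :: "real poly \<Rightarrow> (real \<Rightarrow> complex) \<Rightarrow> real \<Rightarrow> complex" where
  "poly_diffop p f t = (\<Sum>k\<le>degree p. of_real (coeff p k) * \<i> ^ k * nderiv k f t)"

lemma Kop_eq_poly_diffop: "Kop \<gamma> n f t = (-\<i>) ^ n * poly_diffop (opoly \<gamma> n) f t"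
  by (simp add: Kop_def poly_diffop_def)

lemma poly_diffop_eq_sum_atMost:
  assumes "degree p \<le> N"
  shows "poly_diffop p f t = (\<Sum>k\<le>N. of_real (coeff p k) * \<i> ^ k * nderiv k f t)"
  unfolding poly_diffop_def
  by (rule sum.mono_neutral_left) (use assms in \<open>auto simp: coeff_eq_0\<close>)

lemma poly_diffop_add: "poly_diffop (p + q) f t = poly_diffop p f t + poly_diffop q f t"
proof -
  define N where "N = max (degree p) (degree q)"
  have "degree (p + q) \<le> N" "degree p \<le> N" "degree q \<le> N"
    unfolding N_def by (simp_all add: degree_add_le)
  then show ?thesis
    by (simp add: poly_diffop_eq_sum_atMost[where N = N] sum.distrib distrib_right)
qed

lemma poly_diffop_smult: "poly_diffop (smult c p) f t = of_real c * poly_diffop p f t"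
  by (simp add: poly_diffop_eq_sum_atMost[OF degree_smult_le] poly_diffop_def
      sum_distrib_left mult.assoc)

lemma poly_diffop_diff: "poly_diffop (p - q) f t = poly_diffop p f t - poly_diffop q f t"
  using poly_diffop_add[of p "smult (-1) q" f t] poly_diffop_smult[of "-1" q f t] by simp

lemma poly_diffop_monom_mult: "poly_diffop ([:0, 1:] * p) f t = \<i> * poly_diffop p (nderiv 1 f) t"
proof -
  have "[:0, 1:] * p = pCons 0 p"
    by (simp add: mult_pCons_left)
  then have "poly_diffop ([:0, 1:] * p) f t =
               (\<Sum>k\<le>Suc (degree p). of_real (coeff (pCons 0 p) k) * \<i> ^ k * nderiv k f t)"
    by (simp add: poly_diffop_eq_sum_atMost[OF degree_pCons_le])
  also have "\<dots> = \<i> * poly_diffop p (nderiv 1 f) t"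
    by (subst sum.atMost_Suc_shift)
       (simp add: poly_diffop_def sum_distrib_left mult_ac nderiv_nderiv_1[unfolded One_nat_def] del: nderiv.simps)
  finally show ?thesis .
qed

lemma has_vector_derivative_poly_diffop:
  assumes "smooth_RC f"
  shows "(poly_diffop p f has_vector_derivative poly_diffop p (nderiv 1 f) t) (at t)"
proof -
  have "poly_diffop p f = (\<lambda>s. \<Sum>k\<le>degree p. of_real (coeff p k) * \<i> ^ k * nderiv k f s)"
    by (simp add: fun_eq_iff poly_diffop_def)
  moreover have "((\<lambda>s. \<Sum>k\<le>degree p. of_real (coeff p k) * \<i> ^ k * nderiv k f s)
                   has_vector_derivative poly_diffop p (nderiv 1 f) t) (at t)"
    unfolding poly_diffop_def nderiv_nderiv_1
    by (intro has_vector_derivative_sum has_vector_derivative_mult_right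
        has_vector_derivative_nderiv assms)
  ultimately show ?thesis by simp
qed

lemma has_vector_derivative_Kop:
  assumes "smooth_RC f"
  shows "(Kop \<gamma> m f has_vector_derivative
            (-\<i>) ^ Suc m * poly_diffop ([:0, 1:] * opoly \<gamma> m) f t) (at t)"
proof -
  have "Kop \<gamma> m f = (\<lambda>s. (-\<i>) ^ m * poly_diffop (opoly \<gamma> m) f s)"
    by (simp add: fun_eq_iff Kop_eq_poly_diffop)
  moreover have "(-\<i>) ^ m * poly_diffop (opoly \<gamma> m) (nderiv 1 f) t =
                   (-\<i>) ^ Suc m * poly_diffop ([:0, 1:] * opoly \<gamma> m) f t"
    unfolding poly_diffop_monom_mult by (simp add: mult_ac)
  ultimately show ?thesis
    using has_vector_derivative_mult_right[OF has_vector_derivative_poly_diffop[OF assms]]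
    by metis
qed

lemma has_vector_derivative_Kop_0:
  assumes "\<gamma> 0 \<noteq> 0" and "smooth_RC f"
  shows "(Kop \<gamma> 0 f has_vector_derivative of_real (\<gamma> 0) * Kop \<gamma> 1 f t) (at t)"
proof -
  have "of_real (\<gamma> 0) * Kop \<gamma> 1 f t = (-\<i>) ^ Suc 0 * poly_diffop ([:0, 1:] * opoly \<gamma> 0) f t"
    using assms(1) unfolding Kop_eq_poly_diffop One_nat_def opoly.simps poly_diffop_smult by simp
  then show ?thesis
    using has_vector_derivative_Kop[OF assms(2), of \<gamma> 0 t] by simp
qed

lemma has_vector_derivative_Kop_Suc:
  assumes "\<gamma> (Suc m) \<noteq> 0" and "smooth_RC f"
  shows "(Kop \<gamma> (Suc m) f has_vector_derivative
            of_real (\<gamma> (Suc m)) * Kop \<gamma> (Suc (Suc m)) f t - of_real (\<gamma> m) * Kop \<gamma> m f t) (at t)"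
proof -
  have "of_real (\<gamma> (Suc m)) * Kop \<gamma> (Suc (Suc m)) f t - of_real (\<gamma> m) * Kop \<gamma> m f t =
          (-\<i>) ^ Suc (Suc m) * poly_diffop ([:0, 1:] * opoly \<gamma> (Suc m)) f t"
    using assms(1) unfolding Kop_eq_poly_diffop opoly.simps poly_diffop_smult poly_diffop_diff
    by (simp add: algebra_simps)
  then show ?thesis
    using has_vector_derivative_Kop[OF assms(2), of \<gamma> "Suc m" t] by simp
qed

lemma has_vector_derivative_sum_Kop_products:
  assumes "\<And>n. \<gamma> n \<noteq> 0" and f: "smooth_RC f" and g: "smooth_RC g"
  shows "((\<lambda>s. \<Sum>m\<le>n. Kop \<gamma> m f s * Kop \<gamma> m g s) has_vector_derivative
           of_real (\<gamma> n) * (Kop \<gamma> (Suc n) f t * Kop \<gamma> n g t + Kop \<gamma> n f t * Kop \<gamma> (Suc n) g t)) (at t)"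
proof (induction n)
  case 0
  show ?case
    using has_vector_derivative_mult[OF has_vector_derivative_Kop_0[of \<gamma> f, OF assms(1) f]
        has_vector_derivative_Kop_0[of \<gamma> g, OF assms(1) g]]
    by (simp add: algebra_simps)
next
  case (Suc n)
  have "((\<lambda>s. Kop \<gamma> (Suc n) f s * Kop \<gamma> (Suc n) g s) has_vector_derivative
          Kop \<gamma> (Suc n) f t * (of_real (\<gamma> (Suc n)) * Kop \<gamma> (Suc (Suc n)) g t - of_real (\<gamma> n) * Kop \<gamma> n g t)
        + (of_real (\<gamma> (Suc n)) * Kop \<gamma> (Suc (Suc n)) f t - of_real (\<gamma> n) * Kop \<gamma> n f t) * Kop \<gamma> (Suc n) g t)
        (at t)"
    by (intro has_vector_derivative_mult has_vector_derivative_Kop_Suc assms)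
  from has_vector_derivative_add[OF Suc.IH this]
  show ?case by (simp add: algebra_simps)
qed

theorem lemma28:
  fixes \<gamma> :: "nat \<Rightarrow> real"
    and f g :: "real \<Rightarrow> complex"
    and n :: nat and t :: real
  assumes pos: "\<And>n. \<gamma> n > 0"
    and C1: "filterlim \<gamma> at_top sequentially"
    and C2: "(\<lambda>n. \<gamma> (Suc n) - \<gamma> n) \<longlonglongrightarrow> 0"
    and C3: "\<exists>n0 m0. \<forall>n\<ge>n0. \<forall>m\<ge>m0. \<gamma> (n + m) > \<gamma> n"
    and C4: "\<not> summable (\<lambda>j. 1 / \<gamma> j)"
    and C5: "\<exists>\<kappa>>1. summable (\<lambda>j. \<gamma> j powr (-\<kappa>))"
    and C6: "summable (\<lambda>n. \<bar>\<gamma> (Suc n) - \<gamma> n\<bar> / (\<gamma> n)\<^sup>2)"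
    and C7: "summable (\<lambda>n. \<bar>(\<gamma> (Suc (Suc n)) - \<gamma> (Suc n)) - (\<gamma> (Suc n) - \<gamma> n)\<bar> / \<gamma> n)"
    and f: "smooth_RC f" and g: "smooth_RC g"
  shows "((\<lambda>s. \<Sum>m\<le>n. Kop \<gamma> m f s * Kop \<gamma> m g s) has_vector_derivative
           complex_of_real (\<gamma> n) *
             (Kop \<gamma> (Suc n) f t * Kop \<gamma> n g t + Kop \<gamma> n f t * Kop \<gamma> (Suc n) g t)) (at t)"
proof -
  have "\<gamma> m \<noteq> 0" for m
    using pos[of m] by simp
  then show ?thesis
    using has_vector_derivative_sum_Kop_products f g by blast
qed

end
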